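(* Let $p=p(x,y)$ be a germ at the origin of an analytic function with $p(0,0)\neq 0$, and let $C,D$ be constants different from $0$ and $1$. Let $W_C$ (resp. $W_D$) be the planar 4-web whose foliations are the kernels of $dx$, $dy$, $dy-p\,dx$, $dy-C\,p\,dx$ (resp. $dx$, $dy$, $dy-p\,dx$, $dy-D\,p\,dx$). Then there is a (linear) bijection between the space of abelian relations of $W_C$ and that of $W_D$; in particular $W_C$ and $W_D$ have the same rank. *)

theory Defs
  imports "HOL-Analysis.Analysis"
begin

definition germ_analytic :: "(complex \<times> complex \<Rightarrow> complex) \<Rightarrow> bool" where
  "germ_analytic f \<longleftrightarrow> (\<exists>c::nat \<Rightarrow> nat \<Rightarrow> complex. \<exists>r>0. \<forall>x y. norm x < r \<and> norm y < r \<longrightarrow>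
      ((\<lambda>(m,n). c m n * x ^ m * y ^ n) has_sum f (x, y)) UNIV)"

definition pdx :: "(complex \<times> complex \<Rightarrow> complex) \<Rightarrow> complex \<times> complex \<Rightarrow> complex" where
  "pdx f z = deriv (\<lambda>x. f (x, snd z)) (fst z)"

definition pdy :: "(complex \<times> complex \<Rightarrow> complex) \<Rightarrow> complex \<times> complex \<Rightarrow> complex" where
  "pdy f z = deriv (\<lambda>y. f (fst z, y)) (snd z)"

(* Abelian relations (normalised by F_i(0)=0, i.e. modulo constants) of the 4-web
   with foliations ker dx, ker dy, ker (dy - p dx), ker (dy - K p dx).
   F i (i<4) is a first integral of the i-th foliation, i.e. dF_i \<and> \<omega>_i = 0:
     ker dx : F_y = 0;  ker dy : F_x = 0;  ker (dy - q dx) : F_x + q F_y = 0;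
   and F_0 + F_1 + F_2 + F_3 = 0 (as germs). *)
definition abel_rel ::
  "(complex \<times> complex \<Rightarrow> complex) \<Rightarrow> complex \<Rightarrow> (nat \<Rightarrow> complex \<times> complex \<Rightarrow> complex) \<Rightarrow> bool" where
  "abel_rel p K F \<longleftrightarrow>
     (\<forall>i<4. germ_analytic (F i) \<and> F i (0,0) = 0) \<and>
     (\<forall>\<^sub>F z in nhds (0,0).
        F 0 z + F 1 z + F 2 z + F 3 z = 0 \<and>
        pdy (F 0) z = 0 \<and>
        pdx (F 1) z = 0 \<and>
        pdx (F 2) z + p z * pdy (F 2) z = 0 \<and>
        pdx (F 3) z + K * p z * pdy (F 3) z = 0)"

definition germ_eq :: "(nat \<Rightarrow> complex \<times> complex \<Rightarrow> complex) \<Rightarrow> (nat \<Rightarrow> complex \<times> complex \<Rightarrow> complex) \<Rightarrow> bool" where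
  "germ_eq F G \<longleftrightarrow> (\<forall>i<4. \<forall>\<^sub>F z in nhds (0,0). F i z = G i z)"

definition ar_linear_bij ::
  "(complex \<times> complex \<Rightarrow> complex) \<Rightarrow> complex \<Rightarrow> complex \<Rightarrow>
   ((nat \<Rightarrow> complex \<times> complex \<Rightarrow> complex) \<Rightarrow> (nat \<Rightarrow> complex \<times> complex \<Rightarrow> complex)) \<Rightarrow> bool" where
  "ar_linear_bij p K1 K2 \<Phi> \<longleftrightarrow>
     (\<forall>F. abel_rel p K1 F \<longrightarrow> abel_rel p K2 (\<Phi> F)) \<and>
     (\<forall>F G. abel_rel p K1 F \<and> abel_rel p K1 G \<and> germ_eq F G \<longrightarrow> germ_eq (\<Phi> F) (\<Phi> G)) \<and>
     (\<forall>F G a b. abel_rel p K1 F \<and> abel_rel p K1 G \<longrightarrow>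
        germ_eq (\<Phi> (\<lambda>i z. a * F i z + b * G i z)) (\<lambda>i z. a * \<Phi> F i z + b * \<Phi> G i z)) \<and>
     (\<forall>F G. abel_rel p K1 F \<and> abel_rel p K1 G \<and> germ_eq (\<Phi> F) (\<Phi> G) \<longrightarrow> germ_eq F G) \<and>
     (\<forall>H. abel_rel p K2 H \<longrightarrow> (\<exists>F. abel_rel p K1 F \<and> germ_eq (\<Phi> F) H))"

end

theory Submission imports Defs begin

text \<open>Using \<open>F\<^sub>0 + F\<^sub>1 + F\<^sub>2 + F\<^sub>3 = 0\<close> to eliminate \<open>F\<^sub>3\<close>, and the first-integral
conditions \<open>\<partial>\<^sub>yF\<^sub>0 = 0\<close>, \<open>\<partial>\<^sub>xF\<^sub>1 = 0\<close>, \<open>\<partial>\<^sub>xF\<^sub>2 = -p \<partial>\<^sub>yF\<^sub>2\<close>, the condition that \<open>F\<^sub>3\<close> be a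
first integral of \<open>dy - K p dx\<close> becomes
  \<open>\<partial>\<^sub>xF\<^sub>0 + p (K \<partial>\<^sub>yF\<^sub>1 + (K - 1) \<partial>\<^sub>yF\<^sub>2) = 0\<close>.
So rescaling \<open>F\<^sub>1\<close> by \<open>C/D\<close> and \<open>F\<^sub>2\<close> by \<open>(C - 1)/(D - 1)\<close>, and replacing \<open>F\<^sub>3\<close> by minus
the sum of the other three, turns abelian relations of \<open>W\<^sub>C\<close> into those of \<open>W\<^sub>D\<close>; the
rescaling with \<open>C\<close> and \<open>D\<close> exchanged is inverse to it.\<close>

lemma double_power_series_differentiable_fst:
  fixes c :: "nat \<Rightarrow> nat \<Rightarrow> complex" and g :: "complex \<times> complex \<Rightarrow> complex"
  assumes hs: "\<forall>x y. norm x < r \<and> norm y < r \<longrightarrow> ((\<lambda>(m,n). c m n * x^m * y^n) has_sum g (x,y)) UNIV"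
    and y: "norm y < r" and x0: "norm x0 < r"
  shows "(\<lambda>x. g (x,y)) field_differentiable at x0"
proof -
  have r: "r > 0" using y norm_ge_zero[of y] by linarith
  define x1 :: complex where "x1 = of_real (r/2)"
  have x1: "norm x1 < r" "x1 \<noteq> 0" using r by (auto simp: x1_def)
  have "(\<lambda>(m,n). c m n * x1^m * y^n) summable_on Sigma UNIV (\<lambda>_. UNIV)"
    using hs x1 y by (auto simp: summable_on_def)
  hence "(\<lambda>n. c m n * x1^m * y^n) summable_on UNIV" for m
    using summable_on_SigmaD1[of "\<lambda>m n. c m n * x1^m * y^n" UNIV "\<lambda>_. UNIV" m] by simp
  hence "(\<lambda>n. (c m n * x1^m * y^n) * inverse (x1^m)) summable_on UNIV" for m
    by (rule summable_on_cmult_left)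
  hence rows: "(\<lambda>n. c m n * y^n) summable_on UNIV" for m
    using x1 by (simp add: field_simps)
  define a where "a m = infsum (\<lambda>n. c m n * y^n) UNIV" for m
  have series: "(\<lambda>m. a m * x^m) sums g (x,y)" if "norm x < r" for x
  proof -
    have "((\<lambda>(m,n). c m n * x^m * y^n) has_sum g (x,y)) (Sigma UNIV (\<lambda>_. UNIV))"
      using hs that y by simp
    moreover have "((\<lambda>n. c m n * y^n * x^m) has_sum a m * x^m) UNIV" for m
      using rows[of m] by (intro has_sum_cmult_left) (simp add: a_def)
    hence "((\<lambda>n. (\<lambda>(m,n). c m n * x^m * y^n) (m, n)) has_sum a m * x^m) UNIV" for m
      by (simp add: mult_ac)
    ultimately have "((\<lambda>m. a m * x^m) has_sum g (x,y)) UNIV"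
      by (rule has_sum_SigmaD)
    thus ?thesis by (rule has_sum_imp_sums)
  qed
  have "((\<lambda>z. \<Sum>n. a n * z^n) has_field_derivative (\<Sum>n. diffs a n * x0^n)) (at x0)"
    by (rule termdiffs_strong'[where K=r]) (use series x0 in \<open>auto simp: sums_iff\<close>)
  hence "((\<lambda>x. g (x,y)) has_field_derivative (\<Sum>n. diffs a n * x0^n)) (at x0)"
    by (rule has_field_derivative_transform_within_open[where S="ball 0 r"])
       (use x0 series in \<open>auto simp: sums_iff\<close>)
  thus ?thesis by (auto simp: field_differentiable_def)
qed

definition has_partials :: "(complex \<times> complex \<Rightarrow> complex) \<Rightarrow> complex \<times> complex \<Rightarrow> bool" where
  "has_partials f z \<longleftrightarrow> (\<lambda>x. f (x, snd z)) field_differentiable at (fst z) \<and>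
                         (\<lambda>y. f (fst z, y)) field_differentiable at (snd z)"

lemma germ_analytic_has_partials:
  assumes "germ_analytic f"
  shows "\<forall>\<^sub>F z in nhds (0,0). has_partials f z"
proof -
  obtain c r where r: "r > 0" and hs: "\<forall>x y. norm x < r \<and> norm y < r \<longrightarrow>
      ((\<lambda>(m,n). c m n * x ^ m * y ^ n) has_sum f (x, y)) UNIV"
    using assms unfolding germ_analytic_def by blast
  have hs_swap: "\<forall>y x. norm y < r \<and> norm x < r \<longrightarrow>
      ((\<lambda>(n,m). c m n * y ^ n * x ^ m) has_sum f (x, y)) UNIV"
  proof (intro allI impI)
    fix y x :: complex assume "norm y < r \<and> norm x < r"
    hence "((\<lambda>(m,n). c m n * x ^ m * y ^ n) has_sum f (x, y)) (UNIV \<times> UNIV)" using hs by simp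
    hence "((\<lambda>(n,m). (\<lambda>(m,n). c m n * x ^ m * y ^ n) (m,n)) has_sum f (x, y)) (UNIV \<times> UNIV)"
      by (subst (asm) has_sum_swap) simp
    thus "((\<lambda>(n,m). c m n * y ^ n * x ^ m) has_sum f (x, y)) UNIV"
      by (simp add: case_prod_unfold mult_ac)
  qed
  have "\<forall>\<^sub>F z in nhds (0,0). z \<in> ball ((0::complex),(0::complex)) r"
    using r by (intro eventually_nhds_in_open) auto
  moreover have "has_partials f z" if "z \<in> ball (0,0) r" for z
  proof -
    have "norm z < r" using that by (simp add: dist_norm norm_minus_commute zero_prod_def[symmetric])
    hence n: "norm (fst z) < r" "norm (snd z) < r"
      by (metis norm_fst_le prod.collapse le_less_trans, metis norm_snd_le prod.collapse le_less_trans)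
    show ?thesis
      using double_power_series_differentiable_fst[OF hs n(2) n(1)]
            double_power_series_differentiable_fst
              [where c = "\<lambda>n m. c m n" and g = "\<lambda>(y,x). f (x,y)", OF _ n(1) n(2)] hs_swap
      by (simp add: has_partials_def)
  qed
  ultimately show ?thesis by (auto intro: eventually_mono)
qed

lemma germ_analytic_lincomb:
  assumes "germ_analytic f" "germ_analytic g"
  shows "germ_analytic (\<lambda>z. a * f z + b * g z)"
proof -
  obtain c r where r: "r > 0" and hs: "\<forall>x y. norm x < r \<and> norm y < r \<longrightarrow>
      ((\<lambda>(m,n). c m n * x ^ m * y ^ n) has_sum f (x, y)) UNIV"
    using assms(1) unfolding germ_analytic_def by blast
  obtain d s where s: "s > 0" and hs2: "\<forall>x y. norm x < s \<and> norm y < s \<longrightarrow>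
      ((\<lambda>(m,n). d m n * x ^ m * y ^ n) has_sum g (x, y)) UNIV"
    using assms(2) unfolding germ_analytic_def by blast
  have "((\<lambda>(m,n). (a * c m n + b * d m n) * x ^ m * y ^ n) has_sum (a * f (x,y) + b * g (x, y))) UNIV"
    if "norm x < min r s" "norm y < min r s" for x y
  proof -
    have "((\<lambda>mn. a * (\<lambda>(m,n). c m n * x ^ m * y ^ n) mn + b * (\<lambda>(m,n). d m n * x ^ m * y ^ n) mn)
       has_sum (a * f (x,y) + b * g (x, y))) UNIV"
      using that hs hs2 by (intro has_sum_add has_sum_cmult_right) auto
    thus ?thesis by (simp add: case_prod_unfold algebra_simps)
  qed
  thus ?thesis unfolding germ_analytic_def using r s
    by (intro exI[of _ "\<lambda>m n. a * c m n + b * d m n"] exI[of _ "min r s"]) auto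
qed

lemma germ_analytic_cmult: "germ_analytic f \<Longrightarrow> germ_analytic (\<lambda>z. c * f z)"
  using germ_analytic_lincomb[of f f c 0] by simp

lemma germ_analytic_add: "germ_analytic f \<Longrightarrow> germ_analytic g \<Longrightarrow> germ_analytic (\<lambda>z. f z + g z)"
  using germ_analytic_lincomb[of f g 1 1] by simp

lemma germ_analytic_uminus: "germ_analytic f \<Longrightarrow> germ_analytic (\<lambda>z. - f z)"
  using germ_analytic_cmult[of f "-1"] by simp

lemma eventually_nhds_slice_fst:
  assumes "eventually P (nhds z)"
  shows "eventually (\<lambda>x. P (x, snd z)) (nhds (fst z))"
proof -
  have "((\<lambda>x. (x, snd z)) \<longlongrightarrow> (fst z, snd z)) (nhds (fst z))"
    by (intro tendsto_Pair filterlim_ident tendsto_const)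
  thus ?thesis using assms by (auto simp: filterlim_iff)
qed

lemma eventually_nhds_slice_snd:
  assumes "eventually P (nhds z)"
  shows "eventually (\<lambda>y. P (fst z, y)) (nhds (snd z))"
proof -
  have "((\<lambda>y. (fst z, y)) \<longlongrightarrow> (fst z, snd z)) (nhds (snd z))"
    by (intro tendsto_Pair filterlim_ident tendsto_const)
  thus ?thesis using assms by (auto simp: filterlim_iff)
qed

lemma has_partials_cmult: "has_partials f z \<Longrightarrow> has_partials (\<lambda>w. c * f w) z"
  by (simp add: has_partials_def field_differentiable_mult)

lemma pdx_cmult: "has_partials f z \<Longrightarrow> pdx (\<lambda>w. c * f w) z = c * pdx f z"
  by (simp add: has_partials_def pdx_def)

lemma pdy_cmult: "has_partials f z \<Longrightarrow> pdy (\<lambda>w. c * f w) z = c * pdy f z"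
  by (simp add: has_partials_def pdy_def)

lemma pdx_eq_neg_sum:
  assumes "\<forall>\<^sub>F w in nhds z. f0 w + f1 w + f2 w + f3 w = 0"
    and "has_partials f0 z" "has_partials f1 z" "has_partials f2 z"
  shows "pdx f3 z = - (pdx f0 z + pdx f1 z + pdx f2 z)"
proof -
  have "\<forall>\<^sub>F x in nhds (fst z). f3 (x, snd z) = - (f0 (x, snd z) + f1 (x, snd z) + f2 (x, snd z))"
    using eventually_nhds_slice_fst[OF assms(1)]
    by (rule eventually_mono) (metis add.commute eq_neg_iff_add_eq_0)
  hence "pdx f3 z = deriv (\<lambda>x. - (f0 (x, snd z) + f1 (x, snd z) + f2 (x, snd z))) (fst z)"
    unfolding pdx_def by (rule deriv_cong_ev) simp
  thus ?thesis
    using assms(2-4) unfolding has_partials_def pdx_def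
    by (simp add: field_differentiable_add field_differentiable_diff field_differentiable_minus)
qed

lemma pdy_eq_neg_sum:
  assumes "\<forall>\<^sub>F w in nhds z. f0 w + f1 w + f2 w + f3 w = 0"
    and "has_partials f0 z" "has_partials f1 z" "has_partials f2 z"
  shows "pdy f3 z = - (pdy f0 z + pdy f1 z + pdy f2 z)"
proof -
  have "\<forall>\<^sub>F y in nhds (snd z). f3 (fst z, y) = - (f0 (fst z, y) + f1 (fst z, y) + f2 (fst z, y))"
    using eventually_nhds_slice_snd[OF assms(1)]
    by (rule eventually_mono) (metis add.commute eq_neg_iff_add_eq_0)
  hence "pdy f3 z = deriv (\<lambda>y. - (f0 (fst z, y) + f1 (fst z, y) + f2 (fst z, y))) (snd z)"
    unfolding pdy_def by (rule deriv_cong_ev) simp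
  thus ?thesis
    using assms(2-4) unfolding has_partials_def pdy_def
    by (simp add: field_differentiable_add field_differentiable_diff field_differentiable_minus)
qed

definition web_first_integrals ::
  "(complex \<times> complex \<Rightarrow> complex) \<Rightarrow> complex \<Rightarrow> (nat \<Rightarrow> complex \<times> complex \<Rightarrow> complex) \<Rightarrow>
   complex \<times> complex \<Rightarrow> bool" where
  "web_first_integrals p K F z \<longleftrightarrow>
     pdy (F 0) z = 0 \<and> pdx (F 1) z = 0 \<and> pdx (F 2) z + p z * pdy (F 2) z = 0 \<and>
     pdx (F 3) z + K * p z * pdy (F 3) z = 0"

lemma abel_rel_iff:
  "abel_rel p K F \<longleftrightarrow> (\<forall>i<4. germ_analytic (F i) \<and> F i (0,0) = 0) \<and>
     (\<forall>\<^sub>F z in nhds (0,0). F 0 z + F 1 z + F 2 z + F 3 z = 0 \<and> web_first_integrals p K F z)"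
  unfolding abel_rel_def web_first_integrals_def ..

lemma fourth_condition_eliminated:
  fixes F :: "nat \<Rightarrow> complex \<times> complex \<Rightarrow> complex"
  assumes "\<forall>\<^sub>F w in nhds z. F 0 w + F 1 w + F 2 w + F 3 w = 0"
    and "has_partials (F 0) z" "has_partials (F 1) z" "has_partials (F 2) z"
    and "pdy (F 0) z = 0" "pdx (F 1) z = 0" "pdx (F 2) z + q * pdy (F 2) z = 0"
  shows "pdx (F 3) z + K * q * pdy (F 3) z
         = - (pdx (F 0) z + q * (K * pdy (F 1) z + (K - 1) * pdy (F 2) z))"
proof -
  have x3: "pdx (F 3) z = - (pdx (F 0) z + pdx (F 1) z + pdx (F 2) z)"
    using assms(1-4) by (rule pdx_eq_neg_sum)
  have y3: "pdy (F 3) z = - (pdy (F 0) z + pdy (F 1) z + pdy (F 2) z)"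
    using assms(1-4) by (rule pdy_eq_neg_sum)
  have x2: "pdx (F 2) z = - q * pdy (F 2) z"
    using assms(7) by (simp add: eq_neg_iff_add_eq_0)
  show ?thesis
    unfolding x3 y3 x2 assms(5,6) by (simp add: algebra_simps)
qed

definition ar_rescale ::
  "complex \<Rightarrow> complex \<Rightarrow> (nat \<Rightarrow> complex \<times> complex \<Rightarrow> complex) \<Rightarrow> (nat \<Rightarrow> complex \<times> complex \<Rightarrow> complex)"
  where
  "ar_rescale K1 K2 F i =
     (if i = 0 then F 0
      else if i = 1 then (\<lambda>z. K1 / K2 * F 1 z)
      else if i = 2 then (\<lambda>z. (K1 - 1) / (K2 - 1) * F 2 z)
      else (\<lambda>z. - (F 0 z + K1 / K2 * F 1 z + (K1 - 1) / (K2 - 1) * F 2 z)))"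

lemma ar_rescale_components:
  "ar_rescale K1 K2 F 0 = F 0"
  "ar_rescale K1 K2 F 1 = (\<lambda>z. K1 / K2 * F 1 z)"
  "ar_rescale K1 K2 F 2 = (\<lambda>z. (K1 - 1) / (K2 - 1) * F 2 z)"
  "ar_rescale K1 K2 F 3 = (\<lambda>z. - (F 0 z + K1 / K2 * F 1 z + (K1 - 1) / (K2 - 1) * F 2 z))"
  by (simp_all add: ar_rescale_def)

lemma web_first_integrals_rescale:
  assumes K2: "K2 \<noteq> 0" "K2 \<noteq> 1"
    and sum: "\<forall>\<^sub>F w in nhds z. F 0 w + F 1 w + F 2 w + F 3 w = 0"
    and hp: "has_partials (F 0) z" "has_partials (F 1) z" "has_partials (F 2) z"
    and F: "web_first_integrals p K1 F z"
  shows "web_first_integrals p K2 (ar_rescale K1 K2 F) z"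
proof -
  define l where "l = K1 / K2"
  define m where "m = (K1 - 1) / (K2 - 1)"
  have l: "K2 * l = K1" and m: "(K2 - 1) * m = K1 - 1"
    using K2 by (simp_all add: l_def m_def)
  let ?G = "ar_rescale K1 K2 F"
  have G: "?G 0 = F 0" "?G 1 = (\<lambda>w. l * F 1 w)" "?G 2 = (\<lambda>w. m * F 2 w)"
    by (simp_all add: ar_rescale_def l_def m_def)
  have G0: "pdy (?G 0) z = 0"
    using F unfolding G by (simp add: web_first_integrals_def)
  have G1: "pdx (?G 1) z = 0"
    using F hp unfolding G by (simp add: pdx_cmult web_first_integrals_def)
  have "pdx (?G 2) z + p z * pdy (?G 2) z = m * (pdx (F 2) z + p z * pdy (F 2) z)"
    using hp unfolding G by (simp add: pdx_cmult pdy_cmult distrib_left mult.left_commute)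
  hence G2: "pdx (?G 2) z + p z * pdy (?G 2) z = 0"
    using F by (simp add: web_first_integrals_def)
  have sumG: "\<forall>\<^sub>F w in nhds z. ?G 0 w + ?G 1 w + ?G 2 w + ?G 3 w = 0"
    by (simp add: ar_rescale_def)
  have hpG: "has_partials (?G 0) z" "has_partials (?G 1) z" "has_partials (?G 2) z"
    using hp unfolding G by (simp_all add: has_partials_cmult)
  have "pdx (?G 3) z + K2 * p z * pdy (?G 3) z
        = - (pdx (?G 0) z + p z * (K2 * pdy (?G 1) z + (K2 - 1) * pdy (?G 2) z))"
    using sumG hpG G0 G1 G2 by (rule fourth_condition_eliminated)
  also have "\<dots> = - (pdx (F 0) z + p z * ((K2 * l) * pdy (F 1) z + ((K2 - 1) * m) * pdy (F 2) z))"
    using hp unfolding G by (simp add: pdy_cmult mult.assoc)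
  also have "\<dots> = pdx (F 3) z + K1 * p z * pdy (F 3) z"
    unfolding l m using F sum hp unfolding web_first_integrals_def
    by (intro fourth_condition_eliminated[symmetric]) auto
  also have "\<dots> = 0"
    using F by (simp add: web_first_integrals_def)
  finally show ?thesis
    using G0 G1 G2 by (simp add: web_first_integrals_def)
qed

lemma abel_rel_rescale:
  assumes F: "abel_rel p K1 F" and K2: "K2 \<noteq> 0" "K2 \<noteq> 1"
  shows "abel_rel p K2 (ar_rescale K1 K2 F)"
proof -
  let ?G = "ar_rescale K1 K2 F"
  have ga: "germ_analytic (F i)" and zero: "F i (0,0) = 0" if "i < 4" for i
    using F that by (auto simp: abel_rel_def)
  have "germ_analytic (?G 0)" "germ_analytic (?G 1)" "germ_analytic (?G 2)" "germ_analytic (?G 3)"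
    unfolding ar_rescale_components using ga[of 0] ga[of 1] ga[of 2]
    by (fastforce intro: germ_analytic_uminus germ_analytic_add germ_analytic_cmult)+
  moreover have "?G 0 (0,0) = 0" "?G 1 (0,0) = 0" "?G 2 (0,0) = 0" "?G 3 (0,0) = 0"
    unfolding ar_rescale_components using zero[of 0] zero[of 1] zero[of 2] by simp_all
  ultimately have "\<forall>i<4. germ_analytic (?G i) \<and> ?G i (0,0) = 0"
    by (simp add: numeral_eq_Suc All_less_Suc)
  moreover have "\<forall>\<^sub>F z in nhds (0,0). ?G 0 z + ?G 1 z + ?G 2 z + ?G 3 z = 0 \<and> web_first_integrals p K2 ?G z"
  proof -
    have ev: "\<forall>\<^sub>F z in nhds (0,0). F 0 z + F 1 z + F 2 z + F 3 z = 0 \<and> web_first_integrals p K1 F z"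
      using F by (simp add: abel_rel_iff)
    hence "\<forall>\<^sub>F z in nhds (0,0). F 0 z + F 1 z + F 2 z + F 3 z = 0"
      by (rule eventually_mono) simp
    hence ev_sum: "\<forall>\<^sub>F z in nhds (0,0). \<forall>\<^sub>F w in nhds z. F 0 w + F 1 w + F 2 w + F 3 w = 0"
      by (simp only: eventually_eventually)
    have "\<forall>\<^sub>F z in nhds (0,0). has_partials (F 0) z" "\<forall>\<^sub>F z in nhds (0,0). has_partials (F 1) z"
      "\<forall>\<^sub>F z in nhds (0,0). has_partials (F 2) z"
      using ga[of 0] ga[of 1] ga[of 2] by (simp_all add: germ_analytic_has_partials)
    with ev ev_sum show ?thesis
    proof eventually_elim
      case (elim z)
      thus ?case
        using web_first_integrals_rescale[OF K2 elim(2-5)] by (simp add: ar_rescale_def)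
    qed
  qed
  ultimately show ?thesis by (simp add: abel_rel_iff)
qed

lemma germ_eq_iff:
  "germ_eq F G \<longleftrightarrow>
     (\<forall>\<^sub>F z in nhds (0,0). F 0 z = G 0 z \<and> F 1 z = G 1 z \<and> F 2 z = G 2 z \<and> F 3 z = G 3 z)"
  by (auto simp: germ_eq_def numeral_eq_Suc All_less_Suc eventually_conj_iff)

lemma germ_eq_refl: "germ_eq F F"
  by (simp add: germ_eq_iff)

lemma germ_eq_sym:
  assumes "germ_eq F G" shows "germ_eq G F"
  using assms unfolding germ_eq_iff by eventually_elim simp

lemma germ_eq_trans [trans]:
  assumes "germ_eq F G" "germ_eq G H" shows "germ_eq F H"
  using assms unfolding germ_eq_iff by eventually_elim simp

lemma ar_rescale_germ_eq:
  assumes "germ_eq F G" shows "germ_eq (ar_rescale K1 K2 F) (ar_rescale K1 K2 G)"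
  using assms unfolding germ_eq_iff ar_rescale_components by eventually_elim simp

lemma ar_rescale_linear:
  "ar_rescale K1 K2 (\<lambda>i z. a * F i z + b * G i z) =
     (\<lambda>i z. a * ar_rescale K1 K2 F i z + b * ar_rescale K1 K2 G i z)"
  by (intro ext) (simp add: ar_rescale_def algebra_simps)

lemma ar_rescale_inverse:
  assumes "abel_rel p K F" and "K1 \<noteq> 0" "K1 \<noteq> 1" "K2 \<noteq> 0" "K2 \<noteq> 1"
  shows "germ_eq (ar_rescale K2 K1 (ar_rescale K1 K2 F)) F"
proof -
  have l: "K2 / K1 * (K1 / K2 * w) = w" and m: "(K2 - 1) / (K1 - 1) * ((K1 - 1) / (K2 - 1) * w) = w"
    for w :: complex
    using assms(2-5) by simp_all
  have "\<forall>\<^sub>F z in nhds (0,0). F 0 z + F 1 z + F 2 z + F 3 z = 0"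
    using assms(1) by (auto simp: abel_rel_iff elim: eventually_mono)
  thus ?thesis
    unfolding germ_eq_iff ar_rescale_components l m
    by eventually_elim (simp only: neg_eq_iff_add_eq_0 simp_thms)
qed

lemma ar_rescale_germ_eq_cancel:
  assumes "abel_rel p K F" "abel_rel p K G" and "K1 \<noteq> 0" "K1 \<noteq> 1" "K2 \<noteq> 0" "K2 \<noteq> 1"
    and "germ_eq (ar_rescale K1 K2 F) (ar_rescale K1 K2 G)"
  shows "germ_eq F G"
proof -
  have "germ_eq F (ar_rescale K2 K1 (ar_rescale K1 K2 F))"
    using ar_rescale_inverse[OF assms(1,3-6)] by (rule germ_eq_sym)
  also have "germ_eq \<dots> (ar_rescale K2 K1 (ar_rescale K1 K2 G))"
    using assms(7) by (rule ar_rescale_germ_eq)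
  also have "germ_eq \<dots> G"
    using assms(2-6) by (rule ar_rescale_inverse)
  finally show ?thesis .
qed

theorem mainTheorem2:
  fixes p :: "complex \<times> complex \<Rightarrow> complex" and C D :: complex
  assumes "germ_analytic p" and "p (0,0) \<noteq> 0"
    and "C \<noteq> 0" and "C \<noteq> 1" and "D \<noteq> 0" and "D \<noteq> 1"
  shows "\<exists>\<Phi>. ar_linear_bij p C D \<Phi>"
proof
  show "ar_linear_bij p C D (ar_rescale C D)"
    unfolding ar_linear_bij_def
  proof (intro conjI allI impI)
    fix F G H :: "nat \<Rightarrow> complex \<times> complex \<Rightarrow> complex" and a b :: complex
    show "abel_rel p C F \<Longrightarrow> abel_rel p D (ar_rescale C D F)"
      by (rule abel_rel_rescale[OF _ assms(5,6)])
    show "abel_rel p C F \<and> abel_rel p C G \<and> germ_eq F G \<Longrightarrow>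
          germ_eq (ar_rescale C D F) (ar_rescale C D G)"
      by (simp add: ar_rescale_germ_eq)
    show "germ_eq (ar_rescale C D (\<lambda>i z. a * F i z + b * G i z))
                  (\<lambda>i z. a * ar_rescale C D F i z + b * ar_rescale C D G i z)"
      by (simp add: ar_rescale_linear germ_eq_refl)
    show "abel_rel p C F \<and> abel_rel p C G \<and> germ_eq (ar_rescale C D F) (ar_rescale C D G) \<Longrightarrow>
          germ_eq F G"
      using ar_rescale_germ_eq_cancel[OF _ _ assms(3-6)] by blast
    show "abel_rel p D H \<Longrightarrow> \<exists>F. abel_rel p C F \<and> germ_eq (ar_rescale C D F) H"
      using abel_rel_rescale[OF _ assms(3,4)] ar_rescale_inverse[OF _ assms(5,6,3,4)] by blast
  qed
qed

end
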